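(* Let $\alpha,\beta$ be real constants with $\alpha\neq0$ and $\alpha\beta^2-4\alpha^2\neq0$, and let $\Omega\subseteq\mathbb{R}^2$ be a domain. Consider real-valued continuously differentiable functions $a_{jk},b_{jk}$ ($j,k\in\{1,2\}$), $c_l,d_l$ ($l\in\{1,2,3\}$) on $\Omega$, and the operator sending a pair of real $C^2$ functions $(u,v)$ on $\Omega$ to $(P,Q)$ with $$P=a_{11}\partial_xu+a_{12}\partial_yu+a_{21}\partial_xv+a_{22}\partial_yv+c_1u+c_2v+c_3,$$ $$Q=b_{11}\partial_xu+b_{12}\partial_yu+b_{21}\partial_xv+b_{22}\partial_yv+d_1u+d_2v+d_3.$$ Writing $w=u+iv$, this operator, viewed as $w\mapsto P+iQ$, is associated to the Cauchy–Riemann operator $\partial_{\bar z}$ (i.e. maps holomorphic $w$ to holomorphic $P+iQ$) if and only if: $c_1+id_1$ and $c_3+id_3$ are holomorphic, $c_2=-\alpha d_1$, $d_2=c_1-\beta d_1$, and there is a holomorphic function $A_1+iA_2$ ($A_1,A_2$ real) such that $$a_{21}=-\alpha A_2+a_{12},\quad a_{22}=\alpha A_1-\alpha a_{11}-\beta a_{12},\quad b_{21}=A_1-\beta A_2+b_{12},\quad b_{22}=\alpha A_2-\alpha b_{11}-\beta b_{12},$$ the coefficients $a_{11},a_{12},b_{11},b_{12}$ being otherwise arbitrary.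
   Context: For real parameters $\alpha,\beta$, $\mathbb{C}(\alpha,\beta)$ denotes the real algebra of numbers $x+iy$ with $i^2=-\alpha-\beta i$; products are $(x_1+iy_1)(x_2+iy_2)=(x_1x_2-\alpha y_1y_2)+i(x_1y_2+x_2y_1-\beta y_1y_2)$ and conjugation is $\overline{x+iy}=x-iy$. For $w=u+iv$ with real $u,v$ depending on $(x,y)$, $\partial_{\bar z}=\tfrac12(\partial_x+i\partial_y)$, and $w$ is holomorphic if $\partial_{\bar z}w=0$, i.e. $\partial_xu-\alpha\partial_yv=0$ and $\partial_yu+\partial_xv-\beta\partial_yv=0$. An operator $\mathbf{L}$ is associated to $\partial_{\bar z}$ if $\partial_{\bar z}w=0$ implies $\partial_{\bar z}(\mathbf{L}w)=0$. *)

theory Defs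
  imports "HOL-Analysis.Analysis"
begin

definition pdx :: "(real \<times> real \<Rightarrow> real) \<Rightarrow> real \<times> real \<Rightarrow> real" where
  "pdx f p = frechet_derivative f (at p) (1, 0)"

definition pdy :: "(real \<times> real \<Rightarrow> real) \<Rightarrow> real \<times> real \<Rightarrow> real" where
  "pdy f p = frechet_derivative f (at p) (0, 1)"

definition C1_on :: "(real \<times> real) set \<Rightarrow> (real \<times> real \<Rightarrow> real) \<Rightarrow> bool" where
  "C1_on \<Omega> f \<longleftrightarrow> (\<forall>p\<in>\<Omega>. f differentiable (at p)) \<and>
      continuous_on \<Omega> (pdx f) \<and> continuous_on \<Omega> (pdy f)"

definition C2_on :: "(real \<times> real) set \<Rightarrow> (real \<times> real \<Rightarrow> real) \<Rightarrow> bool" where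
  "C2_on \<Omega> f \<longleftrightarrow> C1_on \<Omega> f \<and> C1_on \<Omega> (pdx f) \<and> C1_on \<Omega> (pdy f)"

text \<open>w = u + i v is holomorphic in C(alpha,beta) on \<Omega>: differentiable and
  d_x u - alpha d_y v = 0, d_y u + d_x v - beta d_y v = 0.\<close>
definition holo :: "real \<Rightarrow> real \<Rightarrow> (real \<times> real) set \<Rightarrow>
    (real \<times> real \<Rightarrow> real) \<Rightarrow> (real \<times> real \<Rightarrow> real) \<Rightarrow> bool" where
  "holo \<alpha> \<beta> \<Omega> u v \<longleftrightarrow> (\<forall>p\<in>\<Omega>. u differentiable (at p) \<and> v differentiable (at p) \<and>
      pdx u p - \<alpha> * pdy v p = 0 \<and> pdy u p + pdx v p - \<beta> * pdy v p = 0)"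

definition opP :: "(real \<times> real \<Rightarrow> real) \<Rightarrow> (real \<times> real \<Rightarrow> real) \<Rightarrow>
    (real \<times> real \<Rightarrow> real) \<Rightarrow> (real \<times> real \<Rightarrow> real) \<Rightarrow>
    (real \<times> real \<Rightarrow> real) \<Rightarrow> (real \<times> real \<Rightarrow> real) \<Rightarrow> (real \<times> real \<Rightarrow> real) \<Rightarrow>
    (real \<times> real \<Rightarrow> real) \<Rightarrow> (real \<times> real \<Rightarrow> real) \<Rightarrow> real \<times> real \<Rightarrow> real" where
  "opP a11 a12 a21 a22 c1 c2 c3 u v = (\<lambda>p. a11 p * pdx u p + a12 p * pdy u p
      + a21 p * pdx v p + a22 p * pdy v p + c1 p * u p + c2 p * v p + c3 p)"

definition associated ::
  "real \<Rightarrow> real \<Rightarrow> (real \<times> real) set \<Rightarrow>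
   ((real \<times> real \<Rightarrow> real) \<Rightarrow> (real \<times> real \<Rightarrow> real) \<Rightarrow> real \<times> real \<Rightarrow> real) \<Rightarrow>
   ((real \<times> real \<Rightarrow> real) \<Rightarrow> (real \<times> real \<Rightarrow> real) \<Rightarrow> real \<times> real \<Rightarrow> real) \<Rightarrow> bool" where
  "associated \<alpha> \<beta> \<Omega> P Q \<longleftrightarrow>
     (\<forall>u v. C2_on \<Omega> u \<and> C2_on \<Omega> v \<and> holo \<alpha> \<beta> \<Omega> u v \<longrightarrow> holo \<alpha> \<beta> \<Omega> (P u v) (Q u v))"

end

(*
  Write \<partial> = \<partial>/\<partial>x + i \<partial>/\<partial>y for twice the Cauchy-Riemann operator and w' = u_x + i v_x for the
  derivative of a holomorphic w = u + i v. Under the stated conditions the operator maps a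
  holomorphic w to A w' + (c1 + i d1) w + (c3 + i d3), a sum of products of holomorphic functions,
  which is holomorphic.

  Conversely, by the product rule \<partial>(P + i Q) at a point p is an affine function of the 2-jet of w
  at p, and holomorphic quadratic polynomials realise every jet (u, v, v_x, v_y, v_xx) at p, so every
  coefficient vanishes. The v_xx-coefficient says that the w'-part of the operator is multiplication
  by some A; with C = c1 + i d1 and C' = c2 + i d2 the v_x- and v_y-coefficients give
  i \<partial>A = i C - C' and \<alpha> \<partial>A = -(\<alpha> + \<beta> i) C - i C'. Eliminating \<partial>A yields (2\<alpha> + \<beta> i)(i C - C') = 0,
  and 2\<alpha> + \<beta> i is invertible because its norm is 4\<alpha>^2 - \<alpha> \<beta>^2 \<noteq> 0. Hence C' = i C, which is
  c2 = -\<alpha> d1, d2 = c1 - \<beta> d1, and then \<partial>A = 0.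
*)

theory Submission
  imports Defs
begin

section \<open>Partial derivatives\<close>

definition has_partials :: "(real \<times> real \<Rightarrow> real) \<Rightarrow> real \<Rightarrow> real \<Rightarrow> real \<times> real \<Rightarrow> bool" where
  "has_partials f fx fy p \<longleftrightarrow> (f has_derivative (\<lambda>h. fx * fst h + fy * snd h)) (at p)"

lemma has_partialsD:
  assumes "has_partials f fx fy p"
  shows "pdx f p = fx" "pdy f p = fy" "f differentiable (at p)"
proof -
  have "frechet_derivative f (at p) = (\<lambda>h. fx * fst h + fy * snd h)"
    using assms unfolding has_partials_def by (rule frechet_derivative_at[symmetric])
  then show "pdx f p = fx" "pdy f p = fy" by (simp_all add: pdx_def pdy_def)
  show "f differentiable (at p)"
    using assms unfolding has_partials_def differentiable_def by blast
qed

lemma differentiable_has_partials: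
  assumes "f differentiable (at p)"
  shows "has_partials f (pdx f p) (pdy f p) p"
proof -
  let ?D = "frechet_derivative f (at p)"
  have D: "(f has_derivative ?D) (at p)"
    using assms frechet_derivative_works by blast
  then have "linear ?D" by (rule has_derivative_linear)
  then have "?D h = pdx f p * fst h + pdy f p * snd h" for h
    using linear_add[of ?D "(fst h, 0)" "(0, snd h)"] linear_cmul[of ?D "fst h" "(1, 0)"]
      linear_cmul[of ?D "snd h" "(0, 1)"]
    by (simp add: pdx_def pdy_def mult.commute)
  then have "?D = (\<lambda>h. pdx f p * fst h + pdy f p * snd h)" ..
  then show ?thesis using D unfolding has_partials_def by simp
qed

lemma has_partials_const: "has_partials (\<lambda>q. c) 0 0 p"
  unfolding has_partials_def by (simp add: has_derivative_const)

lemma has_partials_fst: "has_partials fst 1 0 p"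
  unfolding has_partials_def by (rule has_derivative_eq_rhs[OF has_derivative_fst[OF has_derivative_ident]]) auto

lemma has_partials_snd: "has_partials snd 0 1 p"
  unfolding has_partials_def by (rule has_derivative_eq_rhs[OF has_derivative_snd[OF has_derivative_ident]]) auto

lemma has_partials_add:
  "has_partials f a b p \<Longrightarrow> has_partials g c d p \<Longrightarrow> has_partials (\<lambda>q. f q + g q) (a + c) (b + d) p"
  unfolding has_partials_def
  by (rule has_derivative_eq_rhs, rule has_derivative_add, assumption+) (auto simp: algebra_simps)

lemma has_partials_diff:
  "has_partials f a b p \<Longrightarrow> has_partials g c d p \<Longrightarrow> has_partials (\<lambda>q. f q - g q) (a - c) (b - d) p"
  unfolding has_partials_def
  by (rule has_derivative_eq_rhs, rule has_derivative_diff, assumption+) (auto simp: algebra_simps)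

lemma has_partials_mult:
  "has_partials f a b p \<Longrightarrow> has_partials g c d p \<Longrightarrow>
    has_partials (\<lambda>q. f q * g q) (a * g p + f p * c) (b * g p + f p * d) p"
  unfolding has_partials_def
  by (rule has_derivative_eq_rhs, rule has_derivative_mult, assumption+) (auto simp: algebra_simps)

lemma has_partials_transform_within_open:
  assumes "has_partials f fx fy p" "open S" "p \<in> S" "\<And>q. q \<in> S \<Longrightarrow> f q = g q"
  shows "has_partials g fx fy p"
  using assms(1) unfolding has_partials_def
  by (rule has_derivative_transform_within_open[OF _ assms(2,3)]) (use assms(4) in auto)

lemma fst_differentiable [simp]: "(fst :: real \<times> real \<Rightarrow> real) differentiable (at p)"
  using has_partialsD(3)[OF has_partials_fst] .

lemma snd_differentiable [simp]: "(snd :: real \<times> real \<Rightarrow> real) differentiable (at p)"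
  using has_partialsD(3)[OF has_partials_snd] .

lemma pdx_const [simp]: "pdx (\<lambda>q. c) p = 0" and pdy_const [simp]: "pdy (\<lambda>q. c) p = 0"
  using has_partialsD[OF has_partials_const] by auto

lemma pdx_fst [simp]: "pdx fst p = 1" and pdy_fst [simp]: "pdy fst p = 0"
  using has_partialsD[OF has_partials_fst] by auto

lemma pdx_snd [simp]: "pdx snd p = 0" and pdy_snd [simp]: "pdy snd p = 1"
  using has_partialsD[OF has_partials_snd] by auto

lemma
  assumes "f differentiable (at p)" "g differentiable (at p)"
  shows pdx_add [simp]: "pdx (\<lambda>q. f q + g q) p = pdx f p + pdx g p"
    and pdy_add [simp]: "pdy (\<lambda>q. f q + g q) p = pdy f p + pdy g p"
    and pdx_diff [simp]: "pdx (\<lambda>q. f q - g q) p = pdx f p - pdx g p"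
    and pdy_diff [simp]: "pdy (\<lambda>q. f q - g q) p = pdy f p - pdy g p"
    and pdx_mult [simp]: "pdx (\<lambda>q. f q * g q) p = pdx f p * g p + f p * pdx g p"
    and pdy_mult [simp]: "pdy (\<lambda>q. f q * g q) p = pdy f p * g p + f p * pdy g p"
  using has_partialsD[OF has_partials_add[OF assms[THEN differentiable_has_partials]]]
    has_partialsD[OF has_partials_diff[OF assms[THEN differentiable_has_partials]]]
    has_partialsD[OF has_partials_mult[OF assms[THEN differentiable_has_partials]]]
  by auto

lemma
  assumes "f differentiable (at p)"
  shows pdx_divide_const [simp]: "pdx (\<lambda>q. f q / c) p = pdx f p / c"
    and pdy_divide_const [simp]: "pdy (\<lambda>q. f q / c) p = pdy f p / c"
  using assms pdx_mult[of f p "\<lambda>q. inverse c"] pdy_mult[of f p "\<lambda>q. inverse c"]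
  by (simp_all add: divide_inverse)

lemma
  assumes "f differentiable (at p)" "open S" "p \<in> S" "\<And>q. q \<in> S \<Longrightarrow> f q = g q"
  shows pdx_transform_within_open: "pdx g p = pdx f p"
    and pdy_transform_within_open: "pdy g p = pdy f p"
  using frechet_derivative_transform_within_open[OF assms] by (simp_all add: pdx_def pdy_def)

section \<open>Symmetry of mixed partial derivatives\<close>

lemma has_real_derivative_pdx:
  assumes "f differentiable (at (s, c))"
  shows "((\<lambda>t. f (t, c)) has_real_derivative pdx f (s, c)) (at s)"
proof -
  have "((\<lambda>t. (t, c)) has_derivative (\<lambda>h. (h, 0))) (at s)"
    by (auto intro!: derivative_eq_intros)
  from has_derivative_compose[OF this differentiable_has_partials[OF assms, unfolded has_partials_def]]
  show ?thesis by (simp add: has_field_derivative_def mult_commute_abs)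
qed

lemma has_real_derivative_pdy:
  assumes "f differentiable (at (c, s))"
  shows "((\<lambda>t. f (c, t)) has_real_derivative pdy f (c, s)) (at s)"
proof -
  have "((\<lambda>t. (c, t)) has_derivative (\<lambda>h. (0, h))) (at s)"
    by (auto intro!: derivative_eq_intros)
  from has_derivative_compose[OF this differentiable_has_partials[OF assms, unfolded has_partials_def]]
  show ?thesis by (simp add: has_field_derivative_def mult_commute_abs)
qed

lemma mixed_partials_mean_value:
  assumes h: "h > 0"
    and box: "\<And>s t. a \<le> s \<Longrightarrow> s \<le> a + h \<Longrightarrow> b \<le> t \<Longrightarrow> t \<le> b + h \<Longrightarrow> (s, t) \<in> S"
    and diff: "\<forall>q\<in>S. f differentiable (at q)"
    and diff_x: "\<forall>q\<in>S. pdx f differentiable (at q)"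
    and diff_y: "\<forall>q\<in>S. pdy f differentiable (at q)"
  obtains s1 t1 s2 t2 where "a < s1" "s1 < a + h" "b < t1" "t1 < b + h"
    "a < s2" "s2 < a + h" "b < t2" "t2 < b + h"
    "pdy (pdx f) (s1, t1) = pdx (pdy f) (s2, t2)"
proof -
  have ah: "a < a + h" and bh: "b < b + h" using h by auto
  have "\<exists>s1. a < s1 \<and> s1 < a + h \<and> (f (a+h, b+h) - f (a+h, b)) - (f (a, b+h) - f (a, b))
      = (a + h - a) * (pdx f (s1, b+h) - pdx f (s1, b))"
    by (rule MVT2[OF ah]) (intro DERIV_diff has_real_derivative_pdx; use diff box bh in auto)
  then obtain s1 where s1: "a < s1" "s1 < a + h"
    and e1: "(f (a+h, b+h) - f (a+h, b)) - (f (a, b+h) - f (a, b)) = h * (pdx f (s1, b+h) - pdx f (s1, b))"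
    by auto
  have "\<exists>t1. b < t1 \<and> t1 < b + h \<and> pdx f (s1, b+h) - pdx f (s1, b) = (b + h - b) * pdy (pdx f) (s1, t1)"
    by (rule MVT2[OF bh]) (intro has_real_derivative_pdy; use diff_x box s1 in auto)
  then obtain t1 where t1: "b < t1" "t1 < b + h"
    and e2: "pdx f (s1, b+h) - pdx f (s1, b) = h * pdy (pdx f) (s1, t1)"
    by auto
  have "\<exists>t2. b < t2 \<and> t2 < b + h \<and> (f (a+h, b+h) - f (a, b+h)) - (f (a+h, b) - f (a, b))
      = (b + h - b) * (pdy f (a+h, t2) - pdy f (a, t2))"
    by (rule MVT2[OF bh]) (intro DERIV_diff has_real_derivative_pdy; use diff box ah in auto)
  then obtain t2 where t2: "b < t2" "t2 < b + h"
    and e3: "(f (a+h, b+h) - f (a, b+h)) - (f (a+h, b) - f (a, b)) = h * (pdy f (a+h, t2) - pdy f (a, t2))"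
    by auto
  have "\<exists>s2. a < s2 \<and> s2 < a + h \<and> pdy f (a+h, t2) - pdy f (a, t2) = (a + h - a) * pdx (pdy f) (s2, t2)"
    by (rule MVT2[OF ah]) (intro has_real_derivative_pdx; use diff_y box t2 in auto)
  then obtain s2 where s2: "a < s2" "s2 < a + h"
    and e4: "pdy f (a+h, t2) - pdy f (a, t2) = h * pdx (pdy f) (s2, t2)"
    by auto
  have "h * (h * pdy (pdx f) (s1, t1)) = h * (h * pdx (pdy f) (s2, t2))"
    using e1 e2 e3 e4 by (simp add: algebra_simps)
  with h have "pdy (pdx f) (s1, t1) = pdx (pdy f) (s2, t2)" by simp
  with s1 t1 s2 t2 that show ?thesis by blast
qed

lemma pdy_pdx_eq_pdx_pdy:
  assumes S: "open S" "p \<in> S"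
    and diff: "\<forall>q\<in>S. f differentiable (at q)"
    and diff_x: "\<forall>q\<in>S. pdx f differentiable (at q)"
    and diff_y: "\<forall>q\<in>S. pdy f differentiable (at q)"
    and cont_xy: "continuous_on S (pdy (pdx f))" and cont_yx: "continuous_on S (pdx (pdy f))"
  shows "pdy (pdx f) p = pdx (pdy f) p"
proof (rule ccontr)
  assume "pdy (pdx f) p \<noteq> pdx (pdy f) p"
  define e where "e = \<bar>pdy (pdx f) p - pdx (pdy f) p\<bar> / 2"
  then have "e > 0" using \<open>pdy (pdx f) p \<noteq> pdx (pdy f) p\<close> by auto
  obtain r1 where "r1 > 0" and r1: "\<And>q. dist q p < r1 \<Longrightarrow> dist (pdy (pdx f) q) (pdy (pdx f) p) < e"
    using cont_xy S \<open>e > 0\<close> unfolding continuous_on_eq_continuous_at[OF S(1)] continuous_at_eps_delta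
    by blast
  obtain r2 where "r2 > 0" and r2: "\<And>q. dist q p < r2 \<Longrightarrow> dist (pdx (pdy f) q) (pdx (pdy f) p) < e"
    using cont_yx S \<open>e > 0\<close> unfolding continuous_on_eq_continuous_at[OF S(1)] continuous_at_eps_delta
    by blast
  obtain r3 where "r3 > 0" and r3: "ball p r3 \<subseteq> S"
    using S open_contains_ball by blast
  define h where "h = min r1 (min r2 r3) / 2"
  have "h > 0" using \<open>r1 > 0\<close> \<open>r2 > 0\<close> \<open>r3 > 0\<close> unfolding h_def by auto
  obtain a b where p: "p = (a, b)" by (cases p)
  have near: "dist (s, t) p < 2 * h" if "a \<le> s" "s \<le> a + h" "b \<le> t" "t \<le> b + h" for s t
  proof -
    have "dist (s, t) p = sqrt ((s - a)\<^sup>2 + (t - b)\<^sup>2)"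
      unfolding p dist_Pair_Pair dist_real_def by simp
    also have "\<dots> \<le> sqrt (h\<^sup>2 + h\<^sup>2)"
      using that by (intro real_sqrt_le_mono add_mono power_mono) auto
    also have "\<dots> = sqrt 2 * h" using \<open>h > 0\<close> by (simp add: real_sqrt_mult)
    also have "\<dots> < 2 * h" using \<open>h > 0\<close> sqrt2_less_2 by simp
    finally show ?thesis .
  qed
  have "2 * h \<le> r1" "2 * h \<le> r2" "2 * h \<le> r3" unfolding h_def by auto
  then have box: "(s, t) \<in> S" if "a \<le> s" "s \<le> a + h" "b \<le> t" "t \<le> b + h" for s t
    using near[OF that] r3 by (auto simp: dist_commute)
  obtain s1 t1 s2 t2 where st: "a < s1" "s1 < a + h" "b < t1" "t1 < b + h"
      "a < s2" "s2 < a + h" "b < t2" "t2 < b + h"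
    and eq: "pdy (pdx f) (s1, t1) = pdx (pdy f) (s2, t2)"
    using mixed_partials_mean_value[OF \<open>h > 0\<close> box diff diff_x diff_y] by blast
  have "dist (pdy (pdx f) (s1, t1)) (pdy (pdx f) p) < e"
    using r1 near[of s1 t1] st \<open>2 * h \<le> r1\<close> by auto
  moreover have "dist (pdx (pdy f) (s2, t2)) (pdx (pdy f) p) < e"
    using r2 near[of s2 t2] st \<open>2 * h \<le> r2\<close> by auto
  ultimately show False
    using eq unfolding e_def dist_real_def by (simp add: abs_if split: if_splits)
qed

lemma C2_on_pdy_pdx_eq_pdx_pdy:
  assumes "open S" "C2_on S f" "p \<in> S"
  shows "pdy (pdx f) p = pdx (pdy f) p"
  using pdy_pdx_eq_pdx_pdy[OF assms(1,3)] assms(2) unfolding C2_on_def C1_on_def by blast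

section \<open>Closure properties of holomorphic functions\<close>

lemma holo_transform_within_open:
  assumes "open \<Omega>" "holo \<alpha> \<beta> \<Omega> f g"
    and "\<And>q. q \<in> \<Omega> \<Longrightarrow> f q = f' q" "\<And>q. q \<in> \<Omega> \<Longrightarrow> g q = g' q"
  shows "holo \<alpha> \<beta> \<Omega> f' g'"
proof -
  have "has_partials f' (pdx f p) (pdy f p) p" "has_partials g' (pdx g p) (pdy g p) p" if "p \<in> \<Omega>" for p
    using assms that unfolding holo_def
    by (metis has_partials_transform_within_open differentiable_has_partials)+
  note pd = this[THEN has_partialsD(1)] this[THEN has_partialsD(2)] this[THEN has_partialsD(3)]
  from assms(2) show ?thesis unfolding holo_def by (simp add: pd)
qed

lemma holo_add:
  "holo \<alpha> \<beta> \<Omega> f1 g1 \<Longrightarrow> holo \<alpha> \<beta> \<Omega> f2 g2 \<Longrightarrow> holo \<alpha> \<beta> \<Omega> (\<lambda>q. f1 q + f2 q) (\<lambda>q. g1 q + g2 q)"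
  unfolding holo_def by (auto simp: algebra_simps)

lemma holo_mult:
  assumes "holo \<alpha> \<beta> \<Omega> f1 g1" "holo \<alpha> \<beta> \<Omega> f2 g2"
  shows "holo \<alpha> \<beta> \<Omega> (\<lambda>q. f1 q * f2 q - \<alpha> * g1 q * g2 q) (\<lambda>q. f1 q * g2 q + g1 q * f2 q - \<beta> * g1 q * g2 q)"
proof -
  have "pdx f1 p = \<alpha> * pdy g1 p" "pdy f1 p = \<beta> * pdy g1 p - pdx g1 p"
    "pdx f2 p = \<alpha> * pdy g2 p" "pdy f2 p = \<beta> * pdy g2 p - pdx g2 p" if "p \<in> \<Omega>" for p
    using assms that unfolding holo_def by auto
  note cr = this
  from assms show ?thesis unfolding holo_def by (simp add: cr algebra_simps)
qed

lemma holo_pdx: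
  assumes "open \<Omega>" "C2_on \<Omega> u" "C2_on \<Omega> v" "holo \<alpha> \<beta> \<Omega> u v"
  shows "holo \<alpha> \<beta> \<Omega> (pdx u) (pdx v)"
  unfolding holo_def
proof
  fix p assume p: "p \<in> \<Omega>"
  have diff: "pdx u differentiable (at p)" "pdy v differentiable (at p)" "pdx v differentiable (at p)"
    using assms(2,3) p unfolding C2_on_def C1_on_def by auto
  have u_x: "pdx u q = \<alpha> * pdy v q" and u_y: "pdy u q = \<beta> * pdy v q - pdx v q" if "q \<in> \<Omega>" for q
    using assms(4) that unfolding holo_def by auto
  have "pdx (pdx u) p = pdx (\<lambda>q. \<alpha> * pdy v q) p"
    by (rule pdx_transform_within_open[OF _ assms(1) p]) (use diff u_x in auto)
  moreover have "pdy (pdx u) p = pdy (\<lambda>q. \<alpha> * pdy v q) p"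
    by (rule pdy_transform_within_open[OF _ assms(1) p]) (use diff u_x in auto)
  moreover have "pdx (pdy u) p = pdx (\<lambda>q. \<beta> * pdy v q - pdx v q) p"
    by (rule pdx_transform_within_open[OF _ assms(1) p]) (use diff u_y in auto)
  moreover have "pdy (pdx u) p = pdx (pdy u) p" "pdy (pdx v) p = pdx (pdy v) p"
    using C2_on_pdy_pdx_eq_pdx_pdy assms(1-3) p by blast+
  ultimately show "pdx u differentiable (at p) \<and> pdx v differentiable (at p) \<and>
      pdx (pdx u) p - \<alpha> * pdy (pdx v) p = 0 \<and> pdy (pdx u) p + pdx (pdx v) p - \<beta> * pdy (pdx v) p = 0"
    using diff by simp
qed

text \<open>On \<Omega> the operator is w \<mapsto> A w' + (c1 + i d1) w + (c3 + i d3), with A = A1 + i A2.\<close>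

lemma holo_opP:
  assumes "open \<Omega>"
    and "holo \<alpha> \<beta> \<Omega> c1 d1" "holo \<alpha> \<beta> \<Omega> c3 d3"
    and c2_d2: "\<forall>p\<in>\<Omega>. c2 p = - \<alpha> * d1 p \<and> d2 p = c1 p - \<beta> * d1 p"
    and "holo \<alpha> \<beta> \<Omega> A1 A2"
    and coeffs: "\<forall>p\<in>\<Omega>. a21 p = - \<alpha> * A2 p + a12 p
                   \<and> a22 p = \<alpha> * A1 p - \<alpha> * a11 p - \<beta> * a12 p
                   \<and> b21 p = A1 p - \<beta> * A2 p + b12 p
                   \<and> b22 p = \<alpha> * A2 p - \<alpha> * b11 p - \<beta> * b12 p"
    and "C2_on \<Omega> u" "C2_on \<Omega> v" and uv: "holo \<alpha> \<beta> \<Omega> u v"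
  shows "holo \<alpha> \<beta> \<Omega> (opP a11 a12 a21 a22 c1 c2 c3 u v) (opP b11 b12 b21 b22 d1 d2 d3 u v)"
proof -
  have "holo \<alpha> \<beta> \<Omega>
      (\<lambda>q. (A1 q * pdx u q - \<alpha> * A2 q * pdx v q) + (c1 q * u q - \<alpha> * d1 q * v q) + c3 q)
      (\<lambda>q. (A1 q * pdx v q + A2 q * pdx u q - \<beta> * A2 q * pdx v q)
         + (c1 q * v q + d1 q * u q - \<beta> * d1 q * v q) + d3 q)"
    using assms by (intro holo_add holo_mult holo_pdx)
  then show ?thesis
  proof (rule holo_transform_within_open[OF \<open>open \<Omega>\<close>])
    fix q assume "q \<in> \<Omega>"
    then have "pdx u q = \<alpha> * pdy v q" "pdy u q = \<beta> * pdy v q - pdx v q"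
      and "c2 q = - \<alpha> * d1 q" "d2 q = c1 q - \<beta> * d1 q"
      and "a21 q = - \<alpha> * A2 q + a12 q" "a22 q = \<alpha> * A1 q - \<alpha> * a11 q - \<beta> * a12 q"
      and "b21 q = A1 q - \<beta> * A2 q + b12 q" "b22 q = \<alpha> * A2 q - \<alpha> * b11 q - \<beta> * b12 q"
      using uv c2_d2 coeffs unfolding holo_def by auto
    note pointwise = this
    show "(A1 q * pdx u q - \<alpha> * A2 q * pdx v q) + (c1 q * u q - \<alpha> * d1 q * v q) + c3 q
          = opP a11 a12 a21 a22 c1 c2 c3 u v q"
      and "(A1 q * pdx v q + A2 q * pdx u q - \<beta> * A2 q * pdx v q)
            + (c1 q * v q + d1 q * u q - \<beta> * d1 q * v q) + d3 q
          = opP b11 b12 b21 b22 d1 d2 d3 u v q"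
      by (simp_all add: opP_def pointwise algebra_simps)
  qed
qed

section \<open>The Cauchy-Riemann defect of the operator\<close>

definition cmul :: "real \<Rightarrow> real \<Rightarrow> real \<times> real \<Rightarrow> real \<times> real \<Rightarrow> real \<times> real" where
  "cmul \<alpha> \<beta> z w =
     (fst z * fst w - \<alpha> * snd z * snd w, fst z * snd w + snd z * fst w - \<beta> * snd z * snd w)"

text \<open>The hypothesis on z says that multiplication by z has nonzero determinant.\<close>

lemma cmul_eq_0_imp:
  assumes "cmul \<alpha> \<beta> z w = 0" "(fst z)\<^sup>2 - \<beta> * fst z * snd z + \<alpha> * (snd z)\<^sup>2 \<noteq> 0"
  shows "w = 0"
proof -
  let ?N = "(fst z)\<^sup>2 - \<beta> * fst z * snd z + \<alpha> * (snd z)\<^sup>2"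
  have "?N * fst w = 0" "?N * snd w = 0"
    using assms(1) unfolding cmul_def prod_eq_iff by (simp_all add: power2_eq_square) algebra+
  with assms(2) show "w = 0" by (simp add: prod_eq_iff)
qed

lemma cmul_system_unique_solution:
  assumes "\<alpha> * \<beta>\<^sup>2 - 4 * \<alpha>\<^sup>2 \<noteq> 0"
    and i: "cmul \<alpha> \<beta> (0, 1) X = cmul \<alpha> \<beta> C (0, 1) - C2"
    and \<alpha>: "\<alpha> *\<^sub>R X = - cmul \<alpha> \<beta> C (\<alpha>, \<beta>) - cmul \<alpha> \<beta> C2 (0, 1)"
  shows "C2 = cmul \<alpha> \<beta> C (0, 1)" "X = 0"
proof -
  have "cmul \<alpha> \<beta> (2 * \<alpha>, \<beta>) (cmul \<alpha> \<beta> C (0, 1) - C2) = 0"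
    using i \<alpha> unfolding cmul_def prod_eq_iff by simp algebra
  moreover have "(2 * \<alpha>)\<^sup>2 - \<beta> * (2 * \<alpha>) * \<beta> + \<alpha> * \<beta>\<^sup>2 \<noteq> 0"
    using assms(1) by (simp add: power2_eq_square algebra_simps)
  ultimately show C2: "C2 = cmul \<alpha> \<beta> C (0, 1)"
    using cmul_eq_0_imp by fastforce
  have "\<alpha> \<noteq> 0" using assms(1) by auto
  moreover have "\<alpha> *\<^sub>R X = 0"
    using \<alpha> unfolding C2 cmul_def prod_eq_iff by (simp add: algebra_simps)
  ultimately show "X = 0" by simp
qed

text \<open>The components of (\<partial>/\<partial>x + i \<partial>/\<partial>y)(u + i v), i.e. of twice the Cauchy-Riemann operator.\<close>

definition dbar ::
    "real \<Rightarrow> real \<Rightarrow> (real \<times> real \<Rightarrow> real) \<Rightarrow> (real \<times> real \<Rightarrow> real) \<Rightarrow> real \<times> real \<Rightarrow> real \<times> real" where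
  "dbar \<alpha> \<beta> u v p = (pdx u p - \<alpha> * pdy v p, pdy u p + pdx v p - \<beta> * pdy v p)"

lemma holo_iff_dbar:
  "holo \<alpha> \<beta> \<Omega> u v \<longleftrightarrow>
    (\<forall>p\<in>\<Omega>. u differentiable (at p) \<and> v differentiable (at p) \<and> dbar \<alpha> \<beta> u v p = 0)"
  by (simp add: holo_def dbar_def prod_eq_iff)

lemma dbar_transform_within_open:
  assumes "f differentiable (at p)" "g differentiable (at p)" "open S" "p \<in> S"
    and "\<And>q. q \<in> S \<Longrightarrow> f q = f' q" "\<And>q. q \<in> S \<Longrightarrow> g q = g' q"
  shows "dbar \<alpha> \<beta> f' g' p = dbar \<alpha> \<beta> f g p"
  using pdx_transform_within_open[OF assms(1,3,4,5)] pdy_transform_within_open[OF assms(1,3,4,5)]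
    pdx_transform_within_open[OF assms(2,3,4,6)] pdy_transform_within_open[OF assms(2,3,4,6)]
  by (simp add: dbar_def)

lemma dbar_opP:
  assumes "\<forall>f\<in>{a11, a12, a21, a22, b11, b12, b21, b22, c1, c2, c3, d1, d2, d3,
      u, v, pdx u, pdy u, pdx v, pdy v}. f differentiable (at p)"
  shows "dbar \<alpha> \<beta> (opP a11 a12 a21 a22 c1 c2 c3 u v) (opP b11 b12 b21 b22 d1 d2 d3 u v) p =
      pdx u p *\<^sub>R dbar \<alpha> \<beta> a11 b11 p + pdy u p *\<^sub>R dbar \<alpha> \<beta> a12 b12 p
    + pdx v p *\<^sub>R dbar \<alpha> \<beta> a21 b21 p + pdy v p *\<^sub>R dbar \<alpha> \<beta> a22 b22 p
    + u p *\<^sub>R dbar \<alpha> \<beta> c1 d1 p + v p *\<^sub>R dbar \<alpha> \<beta> c2 d2 p + dbar \<alpha> \<beta> c3 d3 p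
    + cmul \<alpha> \<beta> (a11 p, b11 p) (pdx (pdx u) p, pdy (pdx u) p)
    + cmul \<alpha> \<beta> (a12 p, b12 p) (pdx (pdy u) p, pdy (pdy u) p)
    + cmul \<alpha> \<beta> (a21 p, b21 p) (pdx (pdx v) p, pdy (pdx v) p)
    + cmul \<alpha> \<beta> (a22 p, b22 p) (pdx (pdy v) p, pdy (pdy v) p)
    + cmul \<alpha> \<beta> (c1 p, d1 p) (pdx u p, pdy u p) + cmul \<alpha> \<beta> (c2 p, d2 p) (pdx v p, pdy v p)"
  using assms by (simp add: opP_def dbar_def cmul_def algebra_simps)

definition quadratic ::
    "real \<Rightarrow> real \<Rightarrow> real \<Rightarrow> real \<Rightarrow> real \<Rightarrow> real \<Rightarrow> real \<times> real \<Rightarrow> real \<times> real \<Rightarrow> real" where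
  "quadratic c cx cy cxx cxy cyy p0 = (\<lambda>q.
     let x = fst q - fst p0; y = snd q - snd p0
     in c + cx * x + cy * y + (cxx / 2) * (x * x) + cxy * (x * y) + (cyy / 2) * (y * y))"

lemma quadratic_center [simp]: "quadratic c cx cy cxx cxy cyy p0 p0 = c"
  by (simp add: quadratic_def)

lemma quadratic_differentiable [simp]: "quadratic c cx cy cxx cxy cyy p0 differentiable (at p)"
  unfolding quadratic_def Let_def by simp

lemma continuous_on_quadratic [continuous_intros]: "continuous_on S (quadratic c cx cy cxx cxy cyy p0)"
  unfolding quadratic_def Let_def by (intro continuous_intros)

lemma pdx_quadratic [simp]: "pdx (quadratic c cx cy cxx cxy cyy p0) = quadratic cx cxx cxy 0 0 0 p0"
  by (simp add: fun_eq_iff quadratic_def Let_def field_simps)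

lemma pdy_quadratic [simp]: "pdy (quadratic c cx cy cxx cxy cyy p0) = quadratic cy cxy cyy 0 0 0 p0"
  by (simp add: fun_eq_iff quadratic_def Let_def field_simps)

lemma C2_on_quadratic: "C2_on S (quadratic c cx cy cxx cxy cyy p0)"
  by (simp add: C2_on_def C1_on_def continuous_intros)

text \<open>The holomorphic quadratic with u = u0, v = v0, v_x = s, v_y = t and v_xx = m at p0.\<close>

lemma holo_quadratic:
  assumes "\<alpha> \<noteq> 0"
  shows "holo \<alpha> \<beta> \<Omega> (quadratic u0 (\<alpha> * t) (\<beta> * t - s) 0 (- m) (- \<beta> * m / \<alpha>) p0)
      (quadratic v0 s t m 0 (- m / \<alpha>) p0)"
  using assms by (simp add: holo_def quadratic_def Let_def field_simps)

lemma associated_jet_equations: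
  assumes "\<alpha> \<noteq> 0"
    and assoc: "associated \<alpha> \<beta> \<Omega> (opP a11 a12 a21 a22 c1 c2 c3) (opP b11 b12 b21 b22 d1 d2 d3)"
    and diff: "\<forall>p\<in>\<Omega>. \<forall>f\<in>{a11, a12, a21, a22, b11, b12, b21, b22, c1, c2, c3, d1, d2, d3}.
      f differentiable (at p)"
    and "p \<in> \<Omega>"
  shows "dbar \<alpha> \<beta> c3 d3 p = 0" "dbar \<alpha> \<beta> c1 d1 p = 0" "dbar \<alpha> \<beta> c2 d2 p = 0"
    and "dbar \<alpha> \<beta> a21 b21 p - dbar \<alpha> \<beta> a12 b12 p = cmul \<alpha> \<beta> (c1 p, d1 p) (0, 1) - (c2 p, d2 p)"
    and "\<alpha> *\<^sub>R dbar \<alpha> \<beta> a11 b11 p + \<beta> *\<^sub>R dbar \<alpha> \<beta> a12 b12 p + dbar \<alpha> \<beta> a22 b22 p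
      = - cmul \<alpha> \<beta> (c1 p, d1 p) (\<alpha>, \<beta>) - cmul \<alpha> \<beta> (c2 p, d2 p) (0, 1)"
    and "(a21 p - a12 p, b21 p - b12 p)
      = cmul \<alpha> \<beta> (\<alpha> * a11 p + \<beta> * a12 p + a22 p, \<alpha> * b11 p + \<beta> * b12 p + b22 p) (0, 1 / \<alpha>)"
proof -
  define D where "D f g = dbar \<alpha> \<beta> f g p" for f g
  define H where "H f g = (f p, g p)" for f g :: "real \<times> real \<Rightarrow> real"
  define defect where "defect u0 v0 s t m = D c3 d3 + u0 *\<^sub>R D c1 d1 + v0 *\<^sub>R D c2 d2
      + s *\<^sub>R (D a21 b21 - D a12 b12 - cmul \<alpha> \<beta> (H c1 d1) (0, 1) + H c2 d2)
      + t *\<^sub>R (\<alpha> *\<^sub>R D a11 b11 + \<beta> *\<^sub>R D a12 b12 + D a22 b22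
                + cmul \<alpha> \<beta> (H c1 d1) (\<alpha>, \<beta>) + cmul \<alpha> \<beta> (H c2 d2) (0, 1))
      + m *\<^sub>R (H a21 b21 - H a12 b12
                - cmul \<alpha> \<beta> (\<alpha> *\<^sub>R H a11 b11 + \<beta> *\<^sub>R H a12 b12 + H a22 b22) (0, 1 / \<alpha>))"
    for u0 v0 s t m
  have E: "defect u0 v0 s t m = 0" for u0 v0 s t m
  proof -
    define u where "u = quadratic u0 (\<alpha> * t) (\<beta> * t - s) 0 (- m) (- \<beta> * m / \<alpha>) p"
    define v where "v = quadratic v0 s t m 0 (- m / \<alpha>) p"
    have "holo \<alpha> \<beta> \<Omega> (opP a11 a12 a21 a22 c1 c2 c3 u v) (opP b11 b12 b21 b22 d1 d2 d3 u v)"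
      using assoc C2_on_quadratic holo_quadratic[OF \<open>\<alpha> \<noteq> 0\<close>] unfolding associated_def u_def v_def
      by blast
    then have "dbar \<alpha> \<beta> (opP a11 a12 a21 a22 c1 c2 c3 u v) (opP b11 b12 b21 b22 d1 d2 d3 u v) p = 0"
      using \<open>p \<in> \<Omega>\<close> unfolding holo_iff_dbar by blast
    moreover have "dbar \<alpha> \<beta> (opP a11 a12 a21 a22 c1 c2 c3 u v) (opP b11 b12 b21 b22 d1 d2 d3 u v) p
        = defect u0 v0 s t m"
      using diff \<open>p \<in> \<Omega>\<close> \<open>\<alpha> \<noteq> 0\<close>
      by (simp add: dbar_opP u_def v_def defect_def D_def H_def cmul_def prod_eq_iff field_simps)
    ultimately show ?thesis by simp
  qed
  show "dbar \<alpha> \<beta> c3 d3 p = 0"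
    using E[of 0 0 0 0 0] by (simp add: defect_def D_def prod_eq_iff)
  then show "dbar \<alpha> \<beta> c1 d1 p = 0" "dbar \<alpha> \<beta> c2 d2 p = 0"
    using E[of 1 0 0 0 0] E[of 0 1 0 0 0] by (simp_all add: defect_def D_def prod_eq_iff)
  show "dbar \<alpha> \<beta> a21 b21 p - dbar \<alpha> \<beta> a12 b12 p = cmul \<alpha> \<beta> (c1 p, d1 p) (0, 1) - (c2 p, d2 p)"
    using E[of 0 0 1 0 0] E[of 0 0 0 0 0]
    by (simp add: defect_def D_def H_def cmul_def prod_eq_iff algebra_simps)
  show "\<alpha> *\<^sub>R dbar \<alpha> \<beta> a11 b11 p + \<beta> *\<^sub>R dbar \<alpha> \<beta> a12 b12 p + dbar \<alpha> \<beta> a22 b22 p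
      = - cmul \<alpha> \<beta> (c1 p, d1 p) (\<alpha>, \<beta>) - cmul \<alpha> \<beta> (c2 p, d2 p) (0, 1)"
    using E[of 0 0 0 1 0] E[of 0 0 0 0 0]
    by (simp add: defect_def D_def H_def cmul_def prod_eq_iff algebra_simps)
  show "(a21 p - a12 p, b21 p - b12 p)
      = cmul \<alpha> \<beta> (\<alpha> * a11 p + \<beta> * a12 p + a22 p, \<alpha> * b11 p + \<beta> * b12 p + b22 p) (0, 1 / \<alpha>)"
    using E[of 0 0 0 0 1] E[of 0 0 0 0 0]
    by (simp add: defect_def D_def H_def cmul_def prod_eq_iff algebra_simps)
qed

lemma associated_imp_conditions:
  assumes nondeg: "\<alpha> * \<beta>\<^sup>2 - 4 * \<alpha>\<^sup>2 \<noteq> 0" and "open \<Omega>"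
    and diff: "\<forall>p\<in>\<Omega>. \<forall>f\<in>{a11, a12, a21, a22, b11, b12, b21, b22, c1, c2, c3, d1, d2, d3}.
      f differentiable (at p)"
    and assoc: "associated \<alpha> \<beta> \<Omega> (opP a11 a12 a21 a22 c1 c2 c3) (opP b11 b12 b21 b22 d1 d2 d3)"
  shows "holo \<alpha> \<beta> \<Omega> c1 d1 \<and> holo \<alpha> \<beta> \<Omega> c3 d3
        \<and> (\<forall>p\<in>\<Omega>. c2 p = - \<alpha> * d1 p \<and> d2 p = c1 p - \<beta> * d1 p)
        \<and> (\<exists>A1 A2. holo \<alpha> \<beta> \<Omega> A1 A2 \<and>
             (\<forall>p\<in>\<Omega>. a21 p = - \<alpha> * A2 p + a12 p
                   \<and> a22 p = \<alpha> * A1 p - \<alpha> * a11 p - \<beta> * a12 p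
                   \<and> b21 p = A1 p - \<beta> * A2 p + b12 p
                   \<and> b22 p = \<alpha> * A2 p - \<alpha> * b11 p - \<beta> * b12 p))"
proof -
  have "\<alpha> \<noteq> 0" using nondeg by auto
  note jet = associated_jet_equations[OF \<open>\<alpha> \<noteq> 0\<close> assoc diff]
  define A1 where "A1 q = a11 q + (\<beta> * a12 q + a22 q) / \<alpha>" for q
  define A2 where "A2 q = b11 q + (\<beta> * b12 q + b22 q) / \<alpha>" for q
  have coeffs: "a21 q = - \<alpha> * A2 q + a12 q \<and> a22 q = \<alpha> * A1 q - \<alpha> * a11 q - \<beta> * a12 q
      \<and> b21 q = A1 q - \<beta> * A2 q + b12 q \<and> b22 q = \<alpha> * A2 q - \<alpha> * b11 q - \<beta> * b12 q"
    if "q \<in> \<Omega>" for q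
    using jet(6)[OF that] \<open>\<alpha> \<noteq> 0\<close> by (simp add: A1_def A2_def cmul_def prod_eq_iff field_simps)
  have solved: "(c2 p, d2 p) = cmul \<alpha> \<beta> (c1 p, d1 p) (0, 1) \<and> dbar \<alpha> \<beta> A1 A2 p = 0
      \<and> A1 differentiable (at p) \<and> A2 differentiable (at p)" if p: "p \<in> \<Omega>" for p
  proof -
    have d: "a11 differentiable (at p)" "a12 differentiable (at p)" "a21 differentiable (at p)"
      "a22 differentiable (at p)" "b11 differentiable (at p)" "b12 differentiable (at p)"
      "b21 differentiable (at p)" "b22 differentiable (at p)"
      using diff p by auto
    have A_diff: "A1 differentiable (at p)" "A2 differentiable (at p)"
      using d \<open>\<alpha> \<noteq> 0\<close> by (simp_all add: A1_def[abs_def] A2_def[abs_def])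
    have "dbar \<alpha> \<beta> a21 b21 p = dbar \<alpha> \<beta> (\<lambda>q. - \<alpha> * A2 q + a12 q) (\<lambda>q. A1 q - \<beta> * A2 q + b12 q) p"
      by (rule dbar_transform_within_open[OF _ _ \<open>open \<Omega>\<close> p]) (use A_diff d coeffs in auto)
    then have "cmul \<alpha> \<beta> (0, 1) (dbar \<alpha> \<beta> A1 A2 p) = dbar \<alpha> \<beta> a21 b21 p - dbar \<alpha> \<beta> a12 b12 p"
      using A_diff d by (simp add: dbar_def cmul_def algebra_simps)
    moreover have "\<alpha> *\<^sub>R dbar \<alpha> \<beta> A1 A2 p
        = \<alpha> *\<^sub>R dbar \<alpha> \<beta> a11 b11 p + \<beta> *\<^sub>R dbar \<alpha> \<beta> a12 b12 p + dbar \<alpha> \<beta> a22 b22 p"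
      using d \<open>\<alpha> \<noteq> 0\<close> by (simp add: A1_def[abs_def] A2_def[abs_def] dbar_def field_simps)
    ultimately show ?thesis
      using cmul_system_unique_solution[OF nondeg] jet(4,5)[OF p] A_diff by metis
  qed
  have "holo \<alpha> \<beta> \<Omega> c1 d1" "holo \<alpha> \<beta> \<Omega> c3 d3" "holo \<alpha> \<beta> \<Omega> A1 A2"
    using jet(1,2) diff solved unfolding holo_iff_dbar by auto
  moreover have "c2 p = - \<alpha> * d1 p \<and> d2 p = c1 p - \<beta> * d1 p" if "p \<in> \<Omega>" for p
    using solved[OF that] by (simp add: cmul_def)
  ultimately show ?thesis using coeffs by blast
qed

theorem lemma2:
  fixes \<alpha> \<beta> :: real and \<Omega> :: "(real \<times> real) set"
    and a11 a12 a21 a22 b11 b12 b21 b22 c1 c2 c3 d1 d2 d3 :: "real \<times> real \<Rightarrow> real"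
  assumes "\<alpha> \<noteq> 0" and "\<alpha> * \<beta>^2 - 4 * \<alpha>^2 \<noteq> 0"
    and "open \<Omega>" and "connected \<Omega>" and "\<Omega> \<noteq> {}"
    and "C1_on \<Omega> a11" "C1_on \<Omega> a12" "C1_on \<Omega> a21" "C1_on \<Omega> a22"
    and "C1_on \<Omega> b11" "C1_on \<Omega> b12" "C1_on \<Omega> b21" "C1_on \<Omega> b22"
    and "C1_on \<Omega> c1" "C1_on \<Omega> c2" "C1_on \<Omega> c3"
    and "C1_on \<Omega> d1" "C1_on \<Omega> d2" "C1_on \<Omega> d3"
  shows "associated \<alpha> \<beta> \<Omega> (opP a11 a12 a21 a22 c1 c2 c3) (opP b11 b12 b21 b22 d1 d2 d3)
    \<longleftrightarrow> holo \<alpha> \<beta> \<Omega> c1 d1 \<and> holo \<alpha> \<beta> \<Omega> c3 d3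
        \<and> (\<forall>p\<in>\<Omega>. c2 p = - \<alpha> * d1 p \<and> d2 p = c1 p - \<beta> * d1 p)
        \<and> (\<exists>A1 A2. holo \<alpha> \<beta> \<Omega> A1 A2 \<and>
             (\<forall>p\<in>\<Omega>. a21 p = - \<alpha> * A2 p + a12 p
                   \<and> a22 p = \<alpha> * A1 p - \<alpha> * a11 p - \<beta> * a12 p
                   \<and> b21 p = A1 p - \<beta> * A2 p + b12 p
                   \<and> b22 p = \<alpha> * A2 p - \<alpha> * b11 p - \<beta> * b12 p))"
    (is "?associated \<longleftrightarrow> ?conditions")
  \<comment> \<open>\<alpha> \<noteq> 0 follows from the second hypothesis.\<close>
proof
  have "\<forall>p\<in>\<Omega>. \<forall>f\<in>{a11, a12, a21, a22, b11, b12, b21, b22, c1, c2, c3, d1, d2, d3}.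
      f differentiable (at p)"
    using assms(6-19) by (simp add: C1_on_def)
  then show "?associated \<Longrightarrow> ?conditions"
    by (rule associated_imp_conditions[OF assms(2,3)])
  show "?conditions \<Longrightarrow> ?associated"
    unfolding associated_def by (elim conjE exE) (blast intro: holo_opP[OF assms(3)])
qed

end
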